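(* Let $H=(E,\{X_i:i\in[n]\})$ be a hypergraph such that $|X_i\cap X_j|\le1$ for all distinct $i,j\in[n]$, and such that there are no $a,b,c\in E$ with $\{a,b\},\{a,c\},\{b,c\}$ all hyperedges. Let $\rho(A)=\sum_{i=1}^n\min\{|A\cap X_i|,1\}$ for $A\subseteq E$. Fix an integer $s$ with $\max\{\rho(A): A\subseteq E,\ |A|\le4\}\le s<\rho(E)$. If the truncation $T(\rho,s)$ is $k$-decomposable, then there is a proper $k$-coloring $c$ of the line graph $G_H$ with $s\ge c_1+2c_2^+$. If $s<\chi(G_H)$, then $T(\rho,s)$ is indecomposable.
   Context: A polymatroid on a finite set $E$ is a function $\rho:2^E\to\mathbb{Z}$ that is normalized, non-decreasing and submodular. A hypergraph is $H=(E,\mathcal{E})$ with $E$ finite and $\mathcal{E}=\{X_i:i\in[n]\}$ a set of nonempty subsets of $E$. The line graph $G_H$ has vertex set $[n]$ with $ij$ an edge iff $i\ne j$ and $X_i\cap X_j\ne\emptyset$. The truncation $T(\rho,s)$ is the polymatroid $X\mapsto\min\{\rho(X),s\}$. A polymatroid is $k$-decomposable if it equals $r_{M_1}+\cdots+r_{M_k}$ for matroids $M_1,\dots,M_k$ on its ground set, and indecomposable if it is not $k$-decomposable for any $k$. For a proper coloring $c:[n]\to[k]$, $c_1$ (resp. $c_2^+$) is the number of $i\in[k]$ with $|c^{-1}(i)|=1$ (resp. $\ge2$). *)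

theory Defs
  imports Main
begin

definition matroid :: "'a set \<Rightarrow> 'a set set \<Rightarrow> bool" where
  "matroid E \<I> \<longleftrightarrow> finite E \<and> (\<forall>I\<in>\<I>. I \<subseteq> E) \<and> {} \<in> \<I>
     \<and> (\<forall>I J. J \<in> \<I> \<and> I \<subseteq> J \<longrightarrow> I \<in> \<I>)
     \<and> (\<forall>I J. I \<in> \<I> \<and> J \<in> \<I> \<and> card I < card J \<longrightarrow> (\<exists>x\<in>J - I. insert x I \<in> \<I>))"

definition matroid_rank :: "'a set set \<Rightarrow> 'a set \<Rightarrow> int" where
  "matroid_rank \<I> X = int (Max (card ` {Y. Y \<subseteq> X \<and> Y \<in> \<I>}))"

definition truncation :: "('a set \<Rightarrow> int) \<Rightarrow> int \<Rightarrow> 'a set \<Rightarrow> int" where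
  "truncation \<rho> s = (\<lambda>X. min (\<rho> X) s)"

definition k_decomposable :: "'a set \<Rightarrow> ('a set \<Rightarrow> int) \<Rightarrow> nat \<Rightarrow> bool" where
  "k_decomposable E \<rho> k \<longleftrightarrow>
     (\<exists>M :: nat \<Rightarrow> 'a set set. (\<forall>j\<in>{1..k}. matroid E (M j))
        \<and> (\<forall>X. X \<subseteq> E \<longrightarrow> \<rho> X = (\<Sum>j\<in>{1..k}. matroid_rank (M j) X)))"

definition indecomposable :: "'a set \<Rightarrow> ('a set \<Rightarrow> int) \<Rightarrow> bool" where
  "indecomposable E \<rho> \<longleftrightarrow> (\<forall>k. \<not> k_decomposable E \<rho> k)"

definition hypergraph :: "'a set \<Rightarrow> nat \<Rightarrow> (nat \<Rightarrow> 'a set) \<Rightarrow> bool" where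
  "hypergraph E n X \<longleftrightarrow> finite E \<and> (\<forall>i\<in>{1..n}. X i \<noteq> {} \<and> X i \<subseteq> E) \<and> inj_on X {1..n}"

definition hyp_rho :: "nat \<Rightarrow> (nat \<Rightarrow> 'a set) \<Rightarrow> 'a set \<Rightarrow> int" where
  "hyp_rho n X A = (\<Sum>i\<in>{1..n}. min (int (card (A \<inter> X i))) 1)"

definition line_adj :: "(nat \<Rightarrow> 'a set) \<Rightarrow> nat \<Rightarrow> nat \<Rightarrow> bool" where
  "line_adj X i j \<longleftrightarrow> i \<noteq> j \<and> X i \<inter> X j \<noteq> {}"

definition proper_coloring :: "nat \<Rightarrow> (nat \<Rightarrow> 'a set) \<Rightarrow> nat \<Rightarrow> (nat \<Rightarrow> nat) \<Rightarrow> bool" where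
  "proper_coloring n X k c \<longleftrightarrow> (\<forall>i\<in>{1..n}. c i \<in> {1..k})
     \<and> (\<forall>i\<in>{1..n}. \<forall>j\<in>{1..n}. line_adj X i j \<longrightarrow> c i \<noteq> c j)"

definition chromatic_number :: "nat \<Rightarrow> (nat \<Rightarrow> 'a set) \<Rightarrow> nat" where
  "chromatic_number n X = (LEAST k. \<exists>c. proper_coloring n X k c)"

definition color_c1 :: "nat \<Rightarrow> nat \<Rightarrow> (nat \<Rightarrow> nat) \<Rightarrow> nat" where
  "color_c1 n k c = card {l\<in>{1..k}. card {i\<in>{1..n}. c i = l} = 1}"

definition color_c2plus :: "nat \<Rightarrow> nat \<Rightarrow> (nat \<Rightarrow> nat) \<Rightarrow> nat" where
  "color_c2plus n k c = card {l\<in>{1..k}. card {i\<in>{1..n}. c i = l} \<ge> 2}"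

end

theory Submission
  imports Defs
begin

text \<open>
  Write the truncation as \<open>r\<^sub>1 + \<dots> + r\<^sub>k\<close>, with \<open>r\<^sub>j\<close> the rank function of \<open>M\<^sub>j\<close>. As \<open>s\<close>
  dominates \<open>\<rho>\<close> on sets of at most four points, the ranks add up to \<open>\<rho>\<close> there; equivalently the
  defects \<open>\<Sum>\<^sub>x\<^sub>\<in>\<^sub>A r\<^sub>j {x} - r\<^sub>j A\<close> add up to the overlap \<open>\<Sum>\<^sub>i (|A \<inter> X\<^sub>i| - 1)\<^sup>+\<close>. On pairs this
  says that two points of a common edge are parallel in exactly one \<open>M\<^sub>j\<close>, and other pairs in
  none. Counting on triples shows that all points of an edge are parallel in one and the same
  \<open>M\<^sub>j\<close>, and counting on quadruples, together with the absence of triangles of 2-edges, that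
  two edges through a common point never get the same matroid. Colouring every edge by its
  matroid, and a singleton edge \<open>{e}\<close> by some matroid in which \<open>e\<close> is not a loop and which no other
  edge at \<open>e\<close> uses, yields a proper colouring of the line graph in which a colour \<open>j\<close> used once
  forces \<open>r\<^sub>j E \<ge> 1\<close> and a colour used twice forces \<open>r\<^sub>j E \<ge> 2\<close>. Hence
  \<open>c\<^sub>1 + 2 c\<^sub>2\<^sup>+ \<le> \<Sum>\<^sub>j r\<^sub>j E = s\<close>, and since \<open>c\<^sub>1 + c\<^sub>2\<^sup>+\<close> colours suffice, \<open>s < \<chi>(G\<^sub>H)\<close>
  leaves no room for a decomposition.
\<close>

section \<open>Matroids: rank, parallel elements and defect\<close>

lemma card_ge_2E:
  assumes "finite A" "2 \<le> card A"
  obtains a b where "a \<in> A" "b \<in> A" "a \<noteq> b"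
  using assms card_le_Suc0_iff_eq[of A] by force

lemma matroid_finite_ground: "matroid E \<I> \<Longrightarrow> finite E"
  unfolding matroid_def by blast

lemma matroid_indep_subset_ground: "matroid E \<I> \<Longrightarrow> Y \<in> \<I> \<Longrightarrow> Y \<subseteq> E"
  unfolding matroid_def by blast

lemma matroid_indep_finite: "matroid E \<I> \<Longrightarrow> Y \<in> \<I> \<Longrightarrow> finite Y"
  by (meson finite_subset matroid_finite_ground matroid_indep_subset_ground)

lemma matroid_empty_indep: "matroid E \<I> \<Longrightarrow> {} \<in> \<I>"
  unfolding matroid_def by blast

lemma matroid_indep_subset: "matroid E \<I> \<Longrightarrow> J \<in> \<I> \<Longrightarrow> Y \<subseteq> J \<Longrightarrow> Y \<in> \<I>"
  unfolding matroid_def by blast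

lemma matroid_augment:
  "matroid E \<I> \<Longrightarrow> Y \<in> \<I> \<Longrightarrow> J \<in> \<I> \<Longrightarrow> card Y < card J \<Longrightarrow> \<exists>x\<in>J - Y. insert x Y \<in> \<I>"
  unfolding matroid_def by blast

lemma matroid_finite_indep_subsets: "matroid E \<I> \<Longrightarrow> finite {Y. Y \<subseteq> A \<and> Y \<in> \<I>}"
  by (rule finite_subset[of _ "Pow E"]) (auto dest: matroid_indep_subset_ground matroid_finite_ground)

lemma matroid_rank_ge_card:
  assumes "matroid E \<I>" "Y \<subseteq> A" "Y \<in> \<I>"
  shows "int (card Y) \<le> matroid_rank \<I> A"
  unfolding matroid_rank_def using assms
  by (auto intro!: Max_ge finite_imageI matroid_finite_indep_subsets)

lemma matroid_rank_witness:
  assumes "matroid E \<I>"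
  obtains Y where "Y \<subseteq> A" "Y \<in> \<I>" "matroid_rank \<I> A = int (card Y)"
proof -
  have "Max (card ` {Y. Y \<subseteq> A \<and> Y \<in> \<I>}) \<in> card ` {Y. Y \<subseteq> A \<and> Y \<in> \<I>}"
    using assms matroid_empty_indep by (intro Max_in finite_imageI matroid_finite_indep_subsets) auto
  then show ?thesis
    using that unfolding matroid_rank_def by auto
qed

lemma matroid_rank_nonneg: "0 \<le> matroid_rank \<I> A"
  unfolding matroid_rank_def by simp

lemma matroid_rank_empty: "matroid E \<I> \<Longrightarrow> matroid_rank \<I> {} = 0"
  by (rule matroid_rank_witness[of E \<I> "{}"]) auto

lemma matroid_rank_mono: "matroid E \<I> \<Longrightarrow> A \<subseteq> B \<Longrightarrow> matroid_rank \<I> A \<le> matroid_rank \<I> B"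
  by (rule matroid_rank_witness[of E \<I> A]) (auto intro: matroid_rank_ge_card)

lemma matroid_rank_singleton_le: "matroid E \<I> \<Longrightarrow> matroid_rank \<I> {a} \<le> 1"
proof (rule matroid_rank_witness[of E \<I> "{a}"])
  fix Y assume "Y \<subseteq> {a}" "matroid_rank \<I> {a} = int (card Y)"
  then show ?thesis
    using card_mono[of "{a}" Y] by simp
qed

lemma matroid_rank_singleton_0_or_1:
  "matroid E \<I> \<Longrightarrow> matroid_rank \<I> {a} = 0 \<or> matroid_rank \<I> {a} = 1"
  using matroid_rank_singleton_le[of E \<I> a] matroid_rank_nonneg[of \<I> "{a}"] by linarith

text \<open>A subset-maximal independent set containing \<open>J\<close> inside \<open>A\<close> cannot be smaller than
  a largest one, by augmentation.\<close>
lemma matroid_indep_extends: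
  assumes M: "matroid E \<I>" and J: "J \<in> \<I>" "J \<subseteq> A"
  obtains K where "J \<subseteq> K" "K \<subseteq> A" "K \<in> \<I>" "matroid_rank \<I> A = int (card K)"
proof -
  let ?F = "{K. J \<subseteq> K \<and> K \<subseteq> A \<and> K \<in> \<I>}"
  have "finite ?F"
    by (rule finite_subset[OF _ matroid_finite_indep_subsets[OF M, of A]]) auto
  moreover have "J \<in> ?F"
    using J by simp
  ultimately obtain K where K: "K \<in> ?F" and K_max: "\<And>K'. K' \<in> ?F \<Longrightarrow> K \<subseteq> K' \<Longrightarrow> K = K'"
    using finite_has_maximal2[of ?F J] by auto
  obtain Y where Y: "Y \<subseteq> A" "Y \<in> \<I>" "matroid_rank \<I> A = int (card Y)"
    using matroid_rank_witness[OF M] .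
  have "\<not> card K < card Y"
  proof
    assume "card K < card Y"
    then obtain x where x: "x \<in> Y - K" "insert x K \<in> \<I>"
      using matroid_augment[OF M] K Y(2) by blast
    then have "insert x K \<in> ?F"
      using K Y(1) by auto
    then show False
      using K_max[of "insert x K"] x(1) by auto
  qed
  moreover have "int (card K) \<le> matroid_rank \<I> A"
    using matroid_rank_ge_card[OF M] K by simp
  ultimately have "matroid_rank \<I> A = int (card K)"
    using Y(3) by linarith
  then show ?thesis
    using that K by blast
qed

lemma matroid_rank_submodular:
  assumes M: "matroid E \<I>"
  shows "matroid_rank \<I> (A \<union> B) + matroid_rank \<I> (A \<inter> B) \<le> matroid_rank \<I> A + matroid_rank \<I> B"
proof -
  obtain J where J: "J \<subseteq> A \<inter> B" "J \<in> \<I>" "matroid_rank \<I> (A \<inter> B) = int (card J)"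
    using matroid_rank_witness[OF M] .
  obtain K where K: "J \<subseteq> K" "K \<subseteq> A \<union> B" "K \<in> \<I>" "matroid_rank \<I> (A \<union> B) = int (card K)"
    using matroid_indep_extends[OF M J(2), of "A \<union> B"] J(1) by blast
  have fin: "finite K"
    using matroid_indep_finite[OF M K(3)] .
  have "int (card (K \<inter> A)) \<le> matroid_rank \<I> A" "int (card (K \<inter> B)) \<le> matroid_rank \<I> B"
    using matroid_rank_ge_card[OF M _ matroid_indep_subset[OF M K(3)]] by auto
  moreover have "card J \<le> card (K \<inter> A \<inter> B)"
    using J(1) K(1) fin by (intro card_mono) auto
  moreover have "(K \<inter> A) \<union> (K \<inter> B) = K" "(K \<inter> A) \<inter> (K \<inter> B) = K \<inter> A \<inter> B"
    using K(2) by auto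
  then have "card K + card (K \<inter> A \<inter> B) = card (K \<inter> A) + card (K \<inter> B)"
    using card_Un_Int[of "K \<inter> A" "K \<inter> B"] fin by simp
  ultimately show ?thesis
    using J(3) K(4) by linarith
qed

lemma matroid_rank_insert_le:
  "matroid E \<I> \<Longrightarrow> matroid_rank \<I> (insert a A) \<le> matroid_rank \<I> A + matroid_rank \<I> {a}"
  using matroid_rank_submodular[of E \<I> A "{a}"] matroid_rank_nonneg[of \<I> "A \<inter> {a}"] by simp

definition matroid_parallel :: "'a set set \<Rightarrow> 'a \<Rightarrow> 'a \<Rightarrow> bool" where
  "matroid_parallel \<I> a b \<longleftrightarrow>
     matroid_rank \<I> {a} = 1 \<and> matroid_rank \<I> {b} = 1 \<and> matroid_rank \<I> {a, b} = 1"

definition matroid_parallel_set :: "'a set set \<Rightarrow> 'a set \<Rightarrow> bool" where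
  "matroid_parallel_set \<I> S \<longleftrightarrow> (\<forall>a\<in>S. \<forall>b\<in>S. a \<noteq> b \<longrightarrow> matroid_parallel \<I> a b)"

lemma matroid_parallel_sym: "matroid_parallel \<I> a b \<Longrightarrow> matroid_parallel \<I> b a"
  unfolding matroid_parallel_def by (simp add: insert_commute)

lemma matroid_parallel_trans:
  assumes M: "matroid E \<I>" and ab: "matroid_parallel \<I> a b" and bc: "matroid_parallel \<I> b c"
  shows "matroid_parallel \<I> a c"
proof -
  have "matroid_rank \<I> ({a, b} \<union> {b, c}) + matroid_rank \<I> ({a, b} \<inter> {b, c})
      \<le> matroid_rank \<I> {a, b} + matroid_rank \<I> {b, c}"
    using matroid_rank_submodular[OF M] .
  moreover have "matroid_rank \<I> {b} \<le> matroid_rank \<I> ({a, b} \<inter> {b, c})"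
    "matroid_rank \<I> {a, c} \<le> matroid_rank \<I> ({a, b} \<union> {b, c})"
    "matroid_rank \<I> {a} \<le> matroid_rank \<I> {a, c}"
    using matroid_rank_mono[OF M] by auto
  ultimately show ?thesis
    using ab bc unfolding matroid_parallel_def by auto
qed

lemma matroid_parallel_set_subset:
  "matroid_parallel_set \<I> S \<Longrightarrow> T \<subseteq> S \<Longrightarrow> matroid_parallel_set \<I> T"
  unfolding matroid_parallel_set_def by blast

lemma matroid_rank_parallel_set_le:
  assumes M: "matroid E \<I>" and S: "matroid_parallel_set \<I> S"
  shows "matroid_rank \<I> S \<le> 1"
proof (rule matroid_rank_witness[OF M, of S])
  fix Y assume Y: "Y \<subseteq> S" "Y \<in> \<I>" "matroid_rank \<I> S = int (card Y)"
  have "card Y \<le> 1"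
  proof (rule ccontr)
    assume "\<not> card Y \<le> 1"
    then obtain b c where bc: "b \<in> Y" "c \<in> Y" "b \<noteq> c"
      using card_ge_2E[OF matroid_indep_finite[OF M Y(2)], of thesis] by simp
    then have "int (card {b, c}) \<le> matroid_rank \<I> {b, c}"
      using matroid_rank_ge_card[OF M subset_refl matroid_indep_subset[OF M Y(2)], of "{b, c}"] by simp
    moreover have "matroid_rank \<I> {b, c} = 1"
      using S Y(1) bc unfolding matroid_parallel_set_def matroid_parallel_def by blast
    ultimately show False
      using bc(3) by simp
  qed
  then show ?thesis
    using Y(3) by simp
qed

lemma matroid_parallel_set_insert:
  assumes M: "matroid E \<I>" and S: "matroid_parallel_set \<I> S"
    and a: "a \<in> S" and ag: "matroid_parallel \<I> a g"
  shows "matroid_parallel_set \<I> (insert g S)"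
proof -
  have "matroid_parallel \<I> b g" if b: "b \<in> S" for b
  proof (cases "b = a")
    case False
    then have "matroid_parallel \<I> b a"
      using S a b unfolding matroid_parallel_set_def by simp
    then show ?thesis
      using matroid_parallel_trans[OF M _ ag] by simp
  qed (use ag in simp)
  then show ?thesis
    using S unfolding matroid_parallel_set_def by (auto intro: matroid_parallel_sym)
qed

definition matroid_defect :: "'a set set \<Rightarrow> 'a set \<Rightarrow> int" where
  "matroid_defect \<I> A = (\<Sum>x\<in>A. matroid_rank \<I> {x}) - matroid_rank \<I> A"

lemma matroid_defect_empty: "matroid E \<I> \<Longrightarrow> matroid_defect \<I> {} = 0"
  unfolding matroid_defect_def by (simp add: matroid_rank_empty)

lemma matroid_defect_insert:
  assumes M: "matroid E \<I>" and A: "finite A" "a \<notin> A"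
  shows "matroid_defect \<I> A \<le> matroid_defect \<I> (insert a A)"
    and "matroid_defect \<I> (insert a A) \<le> matroid_defect \<I> A + 1"
proof -
  have "matroid_defect \<I> (insert a A)
      = matroid_defect \<I> A + matroid_rank \<I> {a} - (matroid_rank \<I> (insert a A) - matroid_rank \<I> A)"
    using A unfolding matroid_defect_def by simp
  moreover have "matroid_rank \<I> (insert a A) \<le> matroid_rank \<I> A + matroid_rank \<I> {a}"
    "matroid_rank \<I> A \<le> matroid_rank \<I> (insert a A)" "matroid_rank \<I> {a} \<le> 1"
    using matroid_rank_insert_le[OF M] matroid_rank_mono[OF M subset_insertI]
      matroid_rank_singleton_le[OF M] by auto
  ultimately show "matroid_defect \<I> A \<le> matroid_defect \<I> (insert a A)"
    and "matroid_defect \<I> (insert a A) \<le> matroid_defect \<I> A + 1"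
    by linarith+
qed

lemma matroid_defect_nonneg:
  assumes M: "matroid E \<I>"
  shows "finite A \<Longrightarrow> 0 \<le> matroid_defect \<I> A"
proof (induction A rule: finite_induct)
  case empty
  then show ?case
    using matroid_defect_empty[OF M] by simp
next
  case (insert a A)
  then show ?case
    using matroid_defect_insert(1)[OF M] by fastforce
qed

lemma matroid_defect_supermodular:
  assumes M: "matroid E \<I>" and "finite A" "finite B"
  shows "matroid_defect \<I> A + matroid_defect \<I> B \<le> matroid_defect \<I> (A \<union> B) + matroid_defect \<I> (A \<inter> B)"
  using assms matroid_rank_submodular[OF M, of A B] sum.union_inter[of A B "\<lambda>x. matroid_rank \<I> {x}"]
  unfolding matroid_defect_def by simp

lemma matroid_defect_mono:
  assumes M: "matroid E \<I>" and AB: "A \<subseteq> B" "finite B"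
  shows "matroid_defect \<I> A \<le> matroid_defect \<I> B"
proof -
  have fin: "finite A" "finite (B - A)"
    using AB finite_subset by auto
  have "matroid_defect \<I> A + matroid_defect \<I> (B - A) \<le> matroid_defect \<I> B + matroid_defect \<I> {}"
    using matroid_defect_supermodular[OF M fin] AB by (simp add: Un_absorb1)
  then show ?thesis
    using matroid_defect_nonneg[OF M fin(2)] matroid_defect_empty[OF M] by simp
qed

lemma matroid_defect_pair:
  assumes M: "matroid E \<I>" and "a \<noteq> b"
  shows "matroid_defect \<I> {a, b} = of_bool (matroid_parallel \<I> a b)"
proof -
  have "matroid_rank \<I> {a} \<le> matroid_rank \<I> {a, b}" "matroid_rank \<I> {b} \<le> matroid_rank \<I> {a, b}"
    "matroid_rank \<I> {a, b} \<le> matroid_rank \<I> {b} + matroid_rank \<I> {a}"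
    using matroid_rank_mono[OF M] matroid_rank_insert_le[OF M, of a "{b}"] by auto
  moreover have "matroid_rank \<I> {a} \<le> 1" "matroid_rank \<I> {b} \<le> 1"
    "0 \<le> matroid_rank \<I> {a}" "0 \<le> matroid_rank \<I> {b}"
    using matroid_rank_singleton_le[OF M] matroid_rank_nonneg by auto
  ultimately show ?thesis
    using assms(2) unfolding matroid_defect_def matroid_parallel_def by auto
qed

lemma matroid_defect_ge_one_if_parallel:
  assumes M: "matroid E \<I>" and A: "finite A" "a \<in> A" "b \<in> A" "a \<noteq> b"
    and ab: "matroid_parallel \<I> a b"
  shows "1 \<le> matroid_defect \<I> A"
  using matroid_defect_pair[OF M A(4)] matroid_defect_mono[OF M _ A(1), of "{a, b}"] A ab by simp

lemma matroid_defect_parallel_set: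
  assumes M: "matroid E \<I>" and S: "finite S" "2 \<le> card S" "matroid_parallel_set \<I> S"
  shows "matroid_defect \<I> S = int (card S) - 1"
proof -
  have singletons: "matroid_rank \<I> {a} = 1" if a: "a \<in> S" for a
  proof -
    obtain b where "b \<in> S" "b \<noteq> a"
    proof (rule card_ge_2E[OF S(1,2)])
      fix b c assume "b \<in> S" "c \<in> S" "b \<noteq> c"
      then show thesis
        using that by (cases "b = a") auto
    qed
    then show ?thesis
      using S(3) a unfolding matroid_parallel_set_def matroid_parallel_def by blast
  qed
  obtain a where "a \<in> S"
    using S(2) by fastforce
  then have "1 \<le> matroid_rank \<I> S"
    using singletons matroid_rank_mono[OF M, of "{a}" S] by auto
  then have "matroid_rank \<I> S = 1"
    using matroid_rank_parallel_set_le[OF M S(3)] by simp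
  then show ?thesis
    using singletons unfolding matroid_defect_def by simp
qed

text \<open>The triangles through \<open>g\<close> pairwise meet in defect-free pairs, and adding \<open>g\<close> raises the
  defect of \<open>{e, f, x}\<close> by at most one; by supermodularity at most one unit of defect is left for
  the triangles.\<close>
lemma matroid_defect_triangles_le:
  assumes M: "matroid E \<I>"
    and distinct: "distinct [e, f, x, g]"
    and efx: "matroid_defect \<I> {e, f, x} = 0"
    and not_parallel: "\<not> matroid_parallel \<I> e g" "\<not> matroid_parallel \<I> f g" "\<not> matroid_parallel \<I> x g"
  shows "matroid_defect \<I> {e, f, g} + matroid_defect \<I> {e, x, g} + matroid_defect \<I> {f, x, g}
    \<le> matroid_defect \<I> {e, f, x, g}"
proof -
  have "insert g {e, f, x} = {e, f, x, g}"
    by auto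
  then have four: "matroid_defect \<I> {e, f, x, g} \<le> 1"
    using matroid_defect_insert(2)[OF M, of "{e, f, x}" g] distinct efx by auto
  have pairs: "matroid_defect \<I> {e, g} = 0" "matroid_defect \<I> {f, g} = 0" "matroid_defect \<I> {x, g} = 0"
    using matroid_defect_pair[OF M] not_parallel distinct by auto
  have "{e, f, g} \<union> {e, x, g} = {e, f, x, g}" "{e, f, g} \<inter> {e, x, g} = {e, g}"
    "{e, f, g} \<union> {f, x, g} = {e, f, x, g}" "{e, f, g} \<inter> {f, x, g} = {f, g}"
    "{e, x, g} \<union> {f, x, g} = {e, f, x, g}" "{e, x, g} \<inter> {f, x, g} = {x, g}"
    using distinct by auto
  then have "matroid_defect \<I> {e, f, g} + matroid_defect \<I> {e, x, g} \<le> matroid_defect \<I> {e, f, x, g}"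
    "matroid_defect \<I> {e, f, g} + matroid_defect \<I> {f, x, g} \<le> matroid_defect \<I> {e, f, x, g}"
    "matroid_defect \<I> {e, x, g} + matroid_defect \<I> {f, x, g} \<le> matroid_defect \<I> {e, f, x, g}"
    using matroid_defect_supermodular[OF M, of "{e, f, g}" "{e, x, g}"]
      matroid_defect_supermodular[OF M, of "{e, f, g}" "{f, x, g}"]
      matroid_defect_supermodular[OF M, of "{e, x, g}" "{f, x, g}"] pairs by simp_all
  moreover have "0 \<le> matroid_defect \<I> {e, f, g}" "0 \<le> matroid_defect \<I> {e, x, g}"
    "0 \<le> matroid_defect \<I> {f, x, g}"
    using matroid_defect_nonneg[OF M] by auto
  ultimately show ?thesis
    using four by linarith
qed

section \<open>Linear hypergraphs and colourings of their line graphs\<close>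

locale linear_hypergraph =
  fixes E :: "'a set" and n :: nat and X :: "nat \<Rightarrow> 'a set"
  assumes hypergraph: "hypergraph E n X"
    and linear: "\<forall>i\<in>{1..n}. \<forall>j\<in>{1..n}. i \<noteq> j \<longrightarrow> card (X i \<inter> X j) \<le> 1"
begin

lemma finite_ground: "finite E"
  using hypergraph unfolding hypergraph_def by blast

lemma edge_subset: "i \<in> {1..n} \<Longrightarrow> X i \<subseteq> E"
  using hypergraph unfolding hypergraph_def by blast

lemma edge_nonempty: "i \<in> {1..n} \<Longrightarrow> X i \<noteq> {}"
  using hypergraph unfolding hypergraph_def by blast

lemma finite_edge: "i \<in> {1..n} \<Longrightarrow> finite (X i)"
  using edge_subset finite_ground finite_subset by blast

lemma edge_inj: "inj_on X {1..n}"
  using hypergraph unfolding hypergraph_def by blast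

lemma two_points_if_not_singleton:
  assumes "i \<in> {1..n}" "\<not> is_singleton (X i)"
  obtains a b where "a \<in> X i" "b \<in> X i" "a \<noteq> b"
  using assms edge_nonempty is_singletonI' by metis

lemma small_edge_eq_pair:
  assumes "i \<in> {1..n}" "a \<in> X i" "b \<in> X i" "a \<noteq> b" "\<not> 3 \<le> card (X i)"
  shows "X i = {a, b}"
proof -
  have "card {a, b} \<le> card (X i)"
    using assms finite_edge by (intro card_mono) auto
  then show ?thesis
    using assms finite_edge card_subset_eq[of "X i" "{a, b}"] by simp
qed

lemma edge_unique:
  assumes "i \<in> {1..n}" "i' \<in> {1..n}" "a \<noteq> b" "a \<in> X i" "b \<in> X i" "a \<in> X i'" "b \<in> X i'"
  shows "i = i'"
proof (rule ccontr)
  assume "i \<noteq> i'"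
  then have "card (X i \<inter> X i') \<le> 1"
    using linear assms(1,2) by blast
  moreover have "card {a, b} \<le> card (X i \<inter> X i')"
    using assms finite_edge by (intro card_mono) auto
  ultimately show False
    using assms(3) by simp
qed

definition incident :: "'a \<Rightarrow> nat set" where
  "incident e = {i\<in>{1..n}. e \<in> X i}"

lemma finite_incident: "finite (incident e)"
  unfolding incident_def by simp

lemma hyp_rho_eq_card_incident: "hyp_rho n X A = int (card (\<Union>x\<in>A. incident x))"
proof -
  have "hyp_rho n X A = (\<Sum>i\<in>{1..n}. of_bool (A \<inter> X i \<noteq> {}))"
    unfolding hyp_rho_def
  proof (rule sum.cong)
    fix i assume "i \<in> {1..n}"
    then have "finite (A \<inter> X i)"
      using finite_edge by blast
    then show "min (int (card (A \<inter> X i))) 1 = of_bool (A \<inter> X i \<noteq> {})"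
      by (cases "A \<inter> X i = {}") (auto simp: card_gt_0_iff Suc_le_eq)
  qed simp
  also have "\<dots> = int (card ({1..n} \<inter> {i. A \<inter> X i \<noteq> {}}))"
    by simp
  also have "{1..n} \<inter> {i. A \<inter> X i \<noteq> {}} = (\<Union>x\<in>A. incident x)"
    unfolding incident_def by auto
  finally show ?thesis .
qed

lemma incident_Int_eq:
  "i \<in> {1..n} \<Longrightarrow> a \<noteq> b \<Longrightarrow> a \<in> X i \<Longrightarrow> b \<in> X i \<Longrightarrow> incident a \<inter> incident b = {i}"
  unfolding incident_def using edge_unique by blast

lemma card_incident_Int_le: "a \<noteq> b \<Longrightarrow> card (incident a \<inter> incident b) \<le> 1"
proof (cases "incident a \<inter> incident b = {}")
  case False
  then obtain i where "i \<in> incident a \<inter> incident b"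
    by blast
  moreover assume "a \<noteq> b"
  ultimately have "incident a \<inter> incident b = {i}"
    using incident_Int_eq unfolding incident_def by auto
  then show ?thesis
    by simp
qed simp

text \<open>For finite \<open>A\<close> this is \<open>\<Sum>\<^sub>i (|A \<inter> X i| - 1)\<^sup>+\<close>.\<close>
definition overlap :: "'a set \<Rightarrow> int" where
  "overlap A = (\<Sum>x\<in>A. int (card (incident x))) - int (card (\<Union>x\<in>A. incident x))"

lemma overlap_insert:
  assumes "finite A" "a \<notin> A"
  shows "overlap (insert a A) = overlap A + int (card (incident a \<inter> (\<Union>x\<in>A. incident x)))"
proof -
  have "finite (\<Union>x\<in>A. incident x)"
    using assms(1) by (simp add: finite_incident)
  then have "card (incident a \<union> (\<Union>x\<in>A. incident x)) + card (incident a \<inter> (\<Union>x\<in>A. incident x))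
      = card (incident a) + card (\<Union>x\<in>A. incident x)"
    using card_Un_Int[OF finite_incident, of _ a] by simp
  then show ?thesis
    unfolding overlap_def using assms by simp
qed

lemma overlap_pair: "a \<noteq> b \<Longrightarrow> overlap {a, b} = int (card (incident a \<inter> incident b))"
  using overlap_insert[of "{b}" a] by (simp add: overlap_def)

lemma overlap_triple:
  "distinct [a, b, c] \<Longrightarrow> overlap {a, b, c}
     = int (card (incident b \<inter> incident c)) + int (card ((incident a \<inter> incident b) \<union> (incident a \<inter> incident c)))"
  using overlap_insert[of "{b, c}" a] overlap_pair[of b c] by (simp add: Int_Un_distrib)

lemma overlap_quadruple:
  "distinct [a, b, c, d] \<Longrightarrow> overlap {a, b, c, d} = overlap {b, c, d}
     + int (card ((incident a \<inter> incident b) \<union> (incident a \<inter> incident c) \<union> (incident a \<inter> incident d)))"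
  using overlap_insert[of "{b, c, d}" a] by (simp add: Int_Un_distrib Un_assoc)

lemma overlap_edge_and_point:
  assumes i: "i \<in> {1..n}" and efx: "e \<in> X i" "f \<in> X i" "x \<in> X i" and g: "g \<notin> X i"
    and distinct: "distinct [e, f, x, g]"
    and joined: "\<And>y. y \<in> {e, f, x} \<Longrightarrow> \<exists>i'\<in>{1..n}. y \<in> X i' \<and> g \<in> X i'"
  shows "overlap {e, f, x} = 2" and "overlap {e, f, g} = 3" and "overlap {e, x, g} = 3"
    and "overlap {f, x, g} = 3" and "overlap {e, f, x, g} = 5"
proof -
  obtain i1 i2 i3 where i123: "i1 \<in> {1..n}" "e \<in> X i1" "g \<in> X i1" "i2 \<in> {1..n}" "f \<in> X i2" "g \<in> X i2"
    "i3 \<in> {1..n}" "x \<in> X i3" "g \<in> X i3"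
    using joined by (metis insertCI)
  have pairs: "incident e \<inter> incident f = {i}" "incident e \<inter> incident x = {i}" "incident f \<inter> incident x = {i}"
    "incident e \<inter> incident g = {i1}" "incident f \<inter> incident g = {i2}" "incident x \<inter> incident g = {i3}"
    using incident_Int_eq i i123 efx distinct by auto
  have "i \<noteq> i1" "i \<noteq> i2" "i \<noteq> i3"
    using g i123 by auto
  moreover have "i1 \<noteq> i2" "i1 \<noteq> i3" "i2 \<noteq> i3"
    using edge_unique[OF i i123(1), of e f] edge_unique[OF i i123(1), of e x]
      edge_unique[OF i i123(4), of f x] efx i123 distinct g by auto
  ultimately show "overlap {e, f, x} = 2" "overlap {e, f, g} = 3" "overlap {e, x, g} = 3"
    "overlap {f, x, g} = 3" "overlap {e, f, x, g} = 5"
    using overlap_triple[of e f x] overlap_triple[of e f g] overlap_triple[of e x g]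
      overlap_triple[of f x g] overlap_quadruple[of e f x g] pairs distinct
    by (simp_all add: Int_commute insert_commute)
qed

end

lemma color_c1_c2plus_le_sum:
  fixes w :: "nat \<Rightarrow> int"
  assumes nonneg: "\<And>l. l \<in> {1..k} \<Longrightarrow> 0 \<le> w l"
    and single: "\<And>l. l \<in> {1..k} \<Longrightarrow> card {i\<in>{1..n}. c i = l} = 1 \<Longrightarrow> 1 \<le> w l"
    and multiple: "\<And>l. l \<in> {1..k} \<Longrightarrow> 2 \<le> card {i\<in>{1..n}. c i = l} \<Longrightarrow> 2 \<le> w l"
  shows "int (color_c1 n k c) + 2 * int (color_c2plus n k c) \<le> (\<Sum>l\<in>{1..k}. w l)"
proof -
  let ?size = "\<lambda>l. card {i\<in>{1..n}. c i = l}"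
  have "int (color_c1 n k c) + 2 * int (color_c2plus n k c)
      = (\<Sum>l\<in>{1..k}. of_bool (?size l = 1) + 2 * of_bool (2 \<le> ?size l))"
    unfolding color_c1_def color_c2plus_def by (simp add: sum.distrib sum_distrib_left Int_def)
  also have "\<dots> \<le> (\<Sum>l\<in>{1..k}. w l)"
    using assms by (intro sum_mono) auto
  finally show ?thesis .
qed

lemma color_c1_plus_c2plus_eq_card_image:
  assumes "\<forall>i\<in>{1..n}. c i \<in> {1..k}"
  shows "color_c1 n k c + color_c2plus n k c = card (c ` {1..n})"
proof -
  define members where "members l = {i\<in>{1..n}. c i = l}" for l
  have "members l \<noteq> {} \<longleftrightarrow> card (members l) = 1 \<or> 2 \<le> card (members l)" for l
  proof -
    have "finite (members l)"
      unfolding members_def by simp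
    then show ?thesis
      using card_eq_0_iff[of "members l"] by linarith
  qed
  moreover have "c ` {1..n} = {l\<in>{1..k}. members l \<noteq> {}}"
    using assms unfolding members_def by auto
  ultimately have "{l\<in>{1..k}. card (members l) = 1} \<union> {l\<in>{1..k}. 2 \<le> card (members l)} = c ` {1..n}"
    by blast
  moreover have "{l\<in>{1..k}. card (members l) = 1} \<inter> {l\<in>{1..k}. 2 \<le> card (members l)} = {}"
    by auto
  ultimately show ?thesis
    using card_Un_disjoint[of "{l\<in>{1..k}. card (members l) = 1}" "{l\<in>{1..k}. 2 \<le> card (members l)}"]
    unfolding color_c1_def color_c2plus_def members_def by simp
qed

text \<open>Renumbering the colours actually used by \<open>1, 2, \<dots>\<close> keeps a colouring proper.\<close>
lemma chromatic_number_le_card_image: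
  assumes c: "proper_coloring n X k c"
  shows "chromatic_number n X \<le> card (c ` {1..n})"
proof -
  obtain h where h: "bij_betw h (c ` {1..n}) {1..card (c ` {1..n})}"
    using finite_same_card_bij[of "c ` {1..n}" "{1..card (c ` {1..n})}"] by auto
  have "proper_coloring n X (card (c ` {1..n})) (h \<circ> c)"
    unfolding proper_coloring_def
  proof (intro conjI ballI impI)
    fix i assume "i \<in> {1..n}"
    then show "(h \<circ> c) i \<in> {1..card (c ` {1..n})}"
      using bij_betw_apply[OF h] by simp
  next
    fix i i' assume ii': "i \<in> {1..n}" "i' \<in> {1..n}" "line_adj X i i'"
    then have "c i \<noteq> c i'"
      using c unfolding proper_coloring_def by blast
    then show "(h \<circ> c) i \<noteq> (h \<circ> c) i'"
      using inj_onD[OF bij_betw_imp_inj_on[OF h], of "c i" "c i'"] ii'(1,2) by auto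
  qed
  then show ?thesis
    unfolding chromatic_number_def by (intro Least_le) blast
qed

lemma chromatic_number_le_colours_used:
  assumes c: "proper_coloring n X k c"
  shows "chromatic_number n X \<le> color_c1 n k c + color_c2plus n k c"
proof -
  have "\<forall>i\<in>{1..n}. c i \<in> {1..k}"
    using c unfolding proper_coloring_def by blast
  then show ?thesis
    using chromatic_number_le_card_image[OF c] color_c1_plus_c2plus_eq_card_image by simp
qed

section \<open>Matroid decompositions of the truncation\<close>

locale truncation_decomposition = linear_hypergraph +
  fixes s :: int and k :: nat and M :: "nat \<Rightarrow> 'a set set"
  assumes s_ge_small: "\<forall>A. A \<subseteq> E \<and> card A \<le> 4 \<longrightarrow> hyp_rho n X A \<le> s"
    and s_less: "s < hyp_rho n X E"
    and matroids: "\<forall>j\<in>{1..k}. matroid E (M j)"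
    and decomposition: "\<forall>Y. Y \<subseteq> E \<longrightarrow> truncation (hyp_rho n X) s Y = (\<Sum>j\<in>{1..k}. matroid_rank (M j) Y)"
begin

abbreviation rk :: "nat \<Rightarrow> 'a set \<Rightarrow> int" where
  "rk j \<equiv> matroid_rank (M j)"

abbreviation parallel :: "nat \<Rightarrow> 'a \<Rightarrow> 'a \<Rightarrow> bool" where
  "parallel j \<equiv> matroid_parallel (M j)"

abbreviation defect :: "nat \<Rightarrow> 'a set \<Rightarrow> int" where
  "defect j \<equiv> matroid_defect (M j)"

lemma matroid_M: "j \<in> {1..k} \<Longrightarrow> matroid E (M j)"
  using matroids by blast

lemma sum_rank_small:
  assumes "A \<subseteq> E" "card A \<le> 4"
  shows "(\<Sum>j\<in>{1..k}. rk j A) = int (card (\<Union>x\<in>A. incident x))"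
proof -
  have "hyp_rho n X A \<le> s"
    using assms s_ge_small by blast
  then have "truncation (hyp_rho n X) s A = int (card (\<Union>x\<in>A. incident x))"
    unfolding truncation_def hyp_rho_eq_card_incident by simp
  then show ?thesis
    using decomposition assms(1) by simp
qed

lemma sum_rank_ground: "(\<Sum>j\<in>{1..k}. rk j E) = s"
proof -
  have "truncation (hyp_rho n X) s E = s"
    unfolding truncation_def using s_less by simp
  then show ?thesis
    using decomposition by simp
qed

lemma sum_defect_small:
  assumes A: "A \<subseteq> E" "card A \<le> 4"
  shows "(\<Sum>j\<in>{1..k}. defect j A) = overlap A"
proof -
  have "(\<Sum>j\<in>{1..k}. defect j A) = (\<Sum>j\<in>{1..k}. \<Sum>x\<in>A. rk j {x}) - (\<Sum>j\<in>{1..k}. rk j A)"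
    unfolding matroid_defect_def by (simp add: sum_subtractf)
  also have "(\<Sum>j\<in>{1..k}. \<Sum>x\<in>A. rk j {x}) = (\<Sum>x\<in>A. \<Sum>j\<in>{1..k}. rk j {x})"
    by (rule sum.swap)
  also have "(\<Sum>x\<in>A. \<Sum>j\<in>{1..k}. rk j {x}) = (\<Sum>x\<in>A. int (card (incident x)))"
    using A sum_rank_small[of "{_}"] by (intro sum.cong) auto
  finally show ?thesis
    using sum_rank_small[OF A] unfolding overlap_def by simp
qed

lemma card_parallel_matroids:
  assumes ab: "a \<noteq> b" "a \<in> E" "b \<in> E"
  shows "card {j\<in>{1..k}. parallel j a b} = card (incident a \<inter> incident b)"
proof -
  have "int (card {j\<in>{1..k}. parallel j a b}) = (\<Sum>j\<in>{1..k}. of_bool (parallel j a b))"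
    by (simp add: Int_def)
  also have "\<dots> = (\<Sum>j\<in>{1..k}. defect j {a, b})"
    using matroid_defect_pair[OF matroid_M] ab(1) by simp
  also have "\<dots> = int (card (incident a \<inter> incident b))"
    using sum_defect_small[of "{a, b}"] overlap_pair[OF ab(1)] ab by (simp add: card_insert_if)
  finally show ?thesis
    by simp
qed

lemma parallel_matroid_unique:
  assumes "j \<in> {1..k}" "j' \<in> {1..k}" "a \<noteq> b" "a \<in> E" "b \<in> E" "parallel j a b" "parallel j' a b"
  shows "j = j'"
proof -
  have "card {j\<in>{1..k}. parallel j a b} \<le> Suc 0"
    using card_parallel_matroids card_incident_Int_le assms(3-5) by simp
  then show ?thesis
    using assms card_le_Suc0_iff_eq[of "{j\<in>{1..k}. parallel j a b}"] by auto
qed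

lemma parallel_matroid_exists:
  assumes i: "i \<in> {1..n}" and ab: "a \<in> X i" "b \<in> X i" "a \<noteq> b"
  obtains j where "j \<in> {1..k}" "parallel j a b"
proof -
  have "card {j\<in>{1..k}. parallel j a b} = 1"
    using card_parallel_matroids[OF ab(3)] incident_Int_eq[OF i ab(3,1,2)] edge_subset[OF i] ab by auto
  then show ?thesis
    using that by (metis (no_types, lifting) card.empty empty_Collect_eq zero_neq_one)
qed

lemma parallel_imp_common_edge:
  assumes "a \<noteq> b" "a \<in> E" "b \<in> E" "j \<in> {1..k}" "parallel j a b"
  obtains i where "i \<in> {1..n}" "a \<in> X i" "b \<in> X i"
proof -
  have "card {j\<in>{1..k}. parallel j a b} \<noteq> 0"
    using assms by auto
  then have "incident a \<inter> incident b \<noteq> {}"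
    using card_parallel_matroids assms(1-3) by force
  then show ?thesis
    using that unfolding incident_def by blast
qed

lemma defect_concentrated:
  assumes A: "A \<subseteq> E" "card A \<le> 4" and j: "j \<in> {1..k}" "defect j A = overlap A"
    and j': "j' \<in> {1..k}" "j' \<noteq> j"
  shows "defect j' A = 0"
proof -
  have fin: "finite A"
    using A(1) finite_ground finite_subset by blast
  have "(\<Sum>j\<in>{1..k}. defect j A) = defect j A + (\<Sum>j\<in>{1..k} - {j}. defect j A)"
    using j(1) by (simp add: sum.remove)
  moreover have "defect j' A \<le> (\<Sum>j\<in>{1..k} - {j}. defect j A)"
    using j' matroid_defect_nonneg[OF matroid_M fin] by (intro member_le_sum) auto
  ultimately show ?thesis
    using sum_defect_small[OF A] j(2) matroid_defect_nonneg[OF matroid_M[OF j'(1)] fin] by simp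
qed

text \<open>Otherwise the three pairs of \<open>{a, b, c}\<close> would be parallel in three different matroids,
  giving the triple defect at least \<open>3\<close>, whereas its overlap is \<open>2\<close>.\<close>
lemma parallel_spreads_in_edge:
  assumes i: "i \<in> {1..n}" and abc: "a \<in> X i" "b \<in> X i" "c \<in> X i" "distinct [a, b, c]"
    and j: "j \<in> {1..k}" and ab: "parallel j a b"
  shows "parallel j a c"
proof (rule ccontr)
  assume ac: "\<not> parallel j a c"
  have E: "a \<in> E" "b \<in> E" "c \<in> E"
    using abc edge_subset[OF i] by auto
  obtain j2 where j2: "j2 \<in> {1..k}" "parallel j2 a c"
    using parallel_matroid_exists[OF i abc(1,3)] abc(4) by auto
  obtain j3 where j3: "j3 \<in> {1..k}" "parallel j3 b c"
    using parallel_matroid_exists[OF i abc(2,3)] abc(4) by auto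
  have "j2 \<noteq> j"
    using ac j2 by auto
  moreover have "j3 \<noteq> j"
    using matroid_parallel_trans[OF matroid_M[OF j] ab] j3 ac by auto
  moreover have "j3 \<noteq> j2"
  proof
    assume "j3 = j2"
    then have "parallel j2 c b"
      using matroid_parallel_sym[OF j3(2)] by simp
    then have "parallel j2 a b"
      using matroid_parallel_trans[OF matroid_M[OF j2(1)] j2(2)] by simp
    then show False
      using parallel_matroid_unique[OF j j2(1) _ E(1,2) ab] abc(4) \<open>j2 \<noteq> j\<close> by simp
  qed
  ultimately have "(\<Sum>j'\<in>{j, j2, j3}. defect j' {a, b, c}) \<le> (\<Sum>j'\<in>{1..k}. defect j' {a, b, c})"
    using j j2 j3 matroid_defect_nonneg[OF matroid_M] by (intro sum_mono2) auto
  also have "\<dots> = overlap {a, b, c}"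
    using sum_defect_small[of "{a, b, c}"] E by (simp add: card_insert_if)
  also have "\<dots> = 2"
    using overlap_triple[OF abc(4)] incident_Int_eq[OF i] abc by simp
  finally have "defect j {a, b, c} + defect j2 {a, b, c} + defect j3 {a, b, c} \<le> 2"
    using \<open>j2 \<noteq> j\<close> \<open>j3 \<noteq> j\<close> \<open>j3 \<noteq> j2\<close> by simp
  moreover have "1 \<le> defect j {a, b, c}" "1 \<le> defect j2 {a, b, c}" "1 \<le> defect j3 {a, b, c}"
    using matroid_defect_ge_one_if_parallel[OF matroid_M[OF j] _ _ _ _ ab, of "{a, b, c}"]
      matroid_defect_ge_one_if_parallel[OF matroid_M[OF j2(1)] _ _ _ _ j2(2), of "{a, b, c}"]
      matroid_defect_ge_one_if_parallel[OF matroid_M[OF j3(1)] _ _ _ _ j3(2), of "{a, b, c}"] abc(4)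
    by auto
  ultimately show False
    by simp
qed

lemma edge_parallel_set_exists:
  assumes i: "i \<in> {1..n}" and ab: "a \<in> X i" "b \<in> X i" "a \<noteq> b"
  obtains j where "j \<in> {1..k}" "matroid_parallel_set (M j) (X i)"
proof -
  obtain j where j: "j \<in> {1..k}" "parallel j a b"
    using parallel_matroid_exists[OF i ab] .
  have a_par: "parallel j a c" if "c \<in> X i" "c \<noteq> a" for c
  proof (cases "c = b")
    case False
    then show ?thesis
      using parallel_spreads_in_edge[OF i ab(1,2) that(1) _ j] ab(3) that(2) by simp
  qed (use j in simp)
  have "parallel j c d" if cd: "c \<in> X i" "d \<in> X i" "c \<noteq> d" for c d
  proof -
    consider "c = a" | "d = a" | "c \<noteq> a" "d \<noteq> a"
      by blast
    then show ?thesis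
    proof cases
      case 1
      then show ?thesis
        using a_par cd by simp
    next
      case 2
      then show ?thesis
        using matroid_parallel_sym[OF a_par[of c]] cd by simp
    next
      case 3
      then show ?thesis
        using matroid_parallel_trans[OF matroid_M[OF j(1)] matroid_parallel_sym[OF a_par[of c]] a_par[of d]] cd
        by simp
    qed
  qed
  then show ?thesis
    using that j(1) unfolding matroid_parallel_set_def by simp
qed

lemma edge_parallel_set_unique:
  assumes "i \<in> {1..n}" "a \<in> X i" "b \<in> X i" "a \<noteq> b" "j \<in> {1..k}" "j' \<in> {1..k}"
    and "matroid_parallel_set (M j) (X i)" "matroid_parallel_set (M j') (X i)"
  shows "j = j'"
  using assms parallel_matroid_unique edge_subset unfolding matroid_parallel_set_def by blast

context
  fixes i j :: nat and e f x g :: 'a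
  assumes i: "i \<in> {1..n}" and efx: "e \<in> X i" "f \<in> X i" "x \<in> X i"
    and g: "g \<in> E" "g \<notin> X i" and distinct: "distinct [e, f, x, g]"
    and j: "j \<in> {1..k}" and quadruple: "matroid_parallel_set (M j) {e, f, x, g}"
begin

lemma quadruple_subset_ground: "{e, f, x, g} \<subseteq> E"
  using efx g(1) edge_subset[OF i] by auto

lemma quadruple_overlaps:
  shows "overlap {e, f, x} = 2" and "overlap {e, f, g} = 3" and "overlap {e, x, g} = 3"
    and "overlap {f, x, g} = 3" and "overlap {e, f, x, g} = 5"
proof -
  have "\<exists>i'\<in>{1..n}. y \<in> X i' \<and> g \<in> X i'" if "y \<in> {e, f, x}" for y
  proof -
    have "parallel j y g" "y \<noteq> g" "y \<in> E"
      using quadruple that distinct quadruple_subset_ground unfolding matroid_parallel_set_def by auto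
    then show ?thesis
      using parallel_imp_common_edge[of y g j] g(1) j by metis
  qed
  from overlap_edge_and_point[OF i efx g(2) distinct this]
  show "overlap {e, f, x} = 2" "overlap {e, f, g} = 3" "overlap {e, x, g} = 3"
    "overlap {f, x, g} = 3" "overlap {e, f, x, g} = 5"
    by simp_all
qed

lemma quadruple_sum_defect:
  assumes "T \<subseteq> {e, f, x, g}"
  shows "(\<Sum>j'\<in>{1..k}. defect j' T) = overlap T"
proof (rule sum_defect_small)
  show "T \<subseteq> E"
    using assms quadruple_subset_ground by blast
  have "card {e, f, x, g} \<le> 4"
    by (simp add: card_insert_if)
  then show "card T \<le> 4"
    using card_mono[OF _ assms] by simp
qed

lemma quadruple_defect_in_j:
  assumes "T \<subseteq> {e, f, x, g}" "2 \<le> card T"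
  shows "defect j T = int (card T) - 1"
  using matroid_defect_parallel_set[OF matroid_M[OF j] _ assms(2) matroid_parallel_set_subset[OF quadruple assms(1)]]
    finite_subset[OF assms(1)] by simp

text \<open>Outside \<open>M j\<close>, the triangles through \<open>g\<close> carry no more defect than the quadruple, because
  \<open>M j\<close> already absorbs the whole overlap of \<open>{e, f, x}\<close> and all parallelisms with \<open>g\<close>.\<close>
lemma quadruple_triangles_elsewhere:
  assumes j': "j' \<in> {1..k}" "j' \<noteq> j"
  shows "defect j' {e, f, g} + defect j' {e, x, g} + defect j' {f, x, g} \<le> defect j' {e, f, x, g}"
proof (rule matroid_defect_triangles_le[OF matroid_M[OF j'(1)] distinct])
  show "defect j' {e, f, x} = 0"
    using defect_concentrated[of "{e, f, x}" j j'] quadruple_defect_in_j[of "{e, f, x}"] quadruple_overlaps(1)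
      quadruple_subset_ground j j' distinct
    by (simp add: card_insert_if)
  show "\<not> parallel j' e g" "\<not> parallel j' f g" "\<not> parallel j' x g"
    using parallel_matroid_unique[OF j j'(1)] quadruple quadruple_subset_ground distinct j'(2)
    unfolding matroid_parallel_set_def by auto
qed

text \<open>Summing triangle defects minus quadruple defect over all matroids gives \<open>3 + 3 + 3 - 5 = 4\<close>
  from the overlaps, but only \<open>2 + 2 + 2 - 3 = 3\<close> from \<open>M j\<close> and nothing positive elsewhere.\<close>
lemma parallel_quadruple_absurd: False
proof -
  define excess where
    "excess j' = defect j' {e, f, g} + defect j' {e, x, g} + defect j' {f, x, g} - defect j' {e, f, x, g}"
    for j'
  have "(\<Sum>j'\<in>{1..k}. excess j') = 4"
    using quadruple_sum_defect[of "{e, f, g}"] quadruple_sum_defect[of "{e, x, g}"]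
      quadruple_sum_defect[of "{f, x, g}"] quadruple_sum_defect[of "{e, f, x, g}"] quadruple_overlaps
    unfolding excess_def by (simp add: sum.distrib sum_subtractf)
  moreover have "(\<Sum>j'\<in>{1..k}. excess j') \<le> excess j"
  proof -
    have "(\<Sum>j'\<in>{1..k} - {j}. excess j') \<le> 0"
      using quadruple_triangles_elsewhere unfolding excess_def by (intro sum_nonpos) auto
    then show ?thesis
      using j by (simp add: sum.remove)
  qed
  moreover have "excess j = 3"
    using quadruple_defect_in_j[of "{e, f, g}"] quadruple_defect_in_j[of "{e, x, g}"]
      quadruple_defect_in_j[of "{f, x, g}"] quadruple_defect_in_j[of "{e, f, x, g}"] distinct
    unfolding excess_def by (simp add: card_insert_if)
  ultimately show False
    by simp
qed

end

lemma large_parallel_edge_closed: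
  assumes i: "i \<in> {1..n}" and j: "j \<in> {1..k}" and P: "matroid_parallel_set (M j) (X i)"
    and large: "3 \<le> card (X i)" and e: "e \<in> X i" and g: "g \<in> E" "g \<notin> X i"
    and eg: "parallel j e g"
  shows False
proof -
  have "2 \<le> card (X i - {e})"
    using large e finite_edge[OF i] by simp
  then obtain f x where fx: "f \<in> X i - {e}" "x \<in> X i - {e}" "f \<noteq> x"
    using card_ge_2E finite_edge[OF i] by blast
  then have "distinct [e, f, x, g]"
    using g(2) e by auto
  moreover have "matroid_parallel_set (M j) {e, f, x, g}"
  proof -
    have "matroid_parallel_set (M j) {e, f, x}"
      using matroid_parallel_set_subset[OF P] e fx by simp
    from matroid_parallel_set_insert[OF matroid_M[OF j] this _ eg] show ?thesis
      by (simp add: insert_commute)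
  qed
  ultimately show False
    using parallel_quadruple_absurd[OF i e _ _ g _ j] fx by blast
qed

end

section \<open>The colouring induced by a decomposition\<close>

context truncation_decomposition
begin

definition edge_colour :: "nat \<Rightarrow> nat" where
  "edge_colour i = (THE j. j \<in> {1..k} \<and> matroid_parallel_set (M j) (X i))"

lemma edge_colour:
  assumes i: "i \<in> {1..n}" and "\<not> is_singleton (X i)"
  shows "edge_colour i \<in> {1..k}" and "matroid_parallel_set (M (edge_colour i)) (X i)"
proof -
  obtain a b where ab: "a \<in> X i" "b \<in> X i" "a \<noteq> b"
    using two_points_if_not_singleton assms .
  obtain j where "j \<in> {1..k}" "matroid_parallel_set (M j) (X i)"
    using edge_parallel_set_exists[OF i ab] .
  then have "\<exists>!j. j \<in> {1..k} \<and> matroid_parallel_set (M j) (X i)"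
    using edge_parallel_set_unique[OF i ab] by blast
  from theI'[OF this] show "edge_colour i \<in> {1..k}" "matroid_parallel_set (M (edge_colour i)) (X i)"
    unfolding edge_colour_def by blast+
qed

lemma edge_colour_eq:
  assumes i: "i \<in> {1..n}" and ab: "a \<in> X i" "b \<in> X i" "a \<noteq> b"
    and j: "j \<in> {1..k}" "parallel j a b"
  shows "edge_colour i = j"
proof -
  have ns: "\<not> is_singleton (X i)"
    using ab is_singleton_the_elem by (metis singletonD)
  then have "parallel (edge_colour i) a b"
    using edge_colour(2)[OF i] ab unfolding matroid_parallel_set_def by blast
  then show ?thesis
    using parallel_matroid_unique[OF edge_colour(1)[OF i ns] j(1) ab(3)] ab edge_subset[OF i] j(2) by blast
qed

text \<open>A singleton edge \<open>{e}\<close> takes a matroid in which \<open>e\<close> is not a loop and which colours no other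
  edge at \<open>e\<close>: there are \<open>|incident e|\<close> matroids of the first kind (the ranks of \<open>{e}\<close> sum to
  \<open>|incident e|\<close>) but fewer than that many other edges at \<open>e\<close>.\<close>
definition singleton_colour :: "nat \<Rightarrow> nat" where
  "singleton_colour i = (SOME j. j \<in> {1..k} \<and> rk j {the_elem (X i)} = 1
     \<and> j \<notin> edge_colour ` (incident (the_elem (X i)) - {i}))"

lemma singleton_colour:
  assumes i: "i \<in> {1..n}" and Xi: "X i = {e}"
  shows "singleton_colour i \<in> {1..k}" and "rk (singleton_colour i) {e} = 1"
    and "singleton_colour i \<notin> edge_colour ` (incident e - {i})"
proof -
  let ?L = "{j\<in>{1..k}. rk j {e} = 1}" and ?C = "edge_colour ` (incident e - {i})"
  have "e \<in> E"
    using edge_subset[OF i] Xi by simp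
  then have "int (card (incident e)) = (\<Sum>j\<in>{1..k}. rk j {e})"
    using sum_rank_small[of "{e}"] by simp
  also have "\<dots> = (\<Sum>j\<in>{1..k}. of_bool (rk j {e} = 1))"
    using matroid_rank_singleton_0_or_1[OF matroid_M] by (intro sum.cong) auto
  also have "\<dots> = int (card ?L)"
    by (simp add: Int_def)
  finally have card_L: "card ?L = card (incident e)"
    by simp
  have "i \<in> incident e"
    unfolding incident_def using i Xi by simp
  have "card ?C \<le> card (incident e - {i})"
    by (rule card_image_le) (simp add: finite_incident)
  also have "\<dots> < card (incident e)"
    using card_Diff1_less[OF finite_incident \<open>i \<in> incident e\<close>] .
  finally have "\<not> ?L \<subseteq> ?C"
    using card_mono[of ?C ?L] finite_incident card_L by auto
  then have "\<exists>j. j \<in> {1..k} \<and> rk j {the_elem (X i)} = 1 \<and> j \<notin> edge_colour ` (incident (the_elem (X i)) - {i})"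
    using Xi by auto
  from someI_ex[OF this] show "singleton_colour i \<in> {1..k}" "rk (singleton_colour i) {e} = 1"
    "singleton_colour i \<notin> edge_colour ` (incident e - {i})"
    unfolding singleton_colour_def using Xi by simp_all
qed

definition colour :: "nat \<Rightarrow> nat" where
  "colour i = (if is_singleton (X i) then singleton_colour i else edge_colour i)"

lemma colour_range: "i \<in> {1..n} \<Longrightarrow> colour i \<in> {1..k}"
  unfolding colour_def using edge_colour(1) singleton_colour(1) by (auto elim: is_singletonE)

lemma colour_witness:
  assumes i: "i \<in> {1..n}"
  obtains e where "e \<in> X i" "rk (colour i) {e} = 1"
proof (cases "is_singleton (X i)")
  case True
  then show ?thesis
    using that singleton_colour(2)[OF i] is_singleton_the_elem unfolding colour_def by (metis insertI1)
next
  case False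
  obtain a b where ab: "a \<in> X i" "b \<in> X i" "a \<noteq> b"
    using two_points_if_not_singleton[OF i False] .
  then have "parallel (colour i) a b"
    using edge_colour(2)[OF i False] False unfolding colour_def matroid_parallel_set_def by simp
  then show ?thesis
    using that ab(1) unfolding matroid_parallel_def by blast
qed

end

locale triangle_free_decomposition = truncation_decomposition +
  assumes no_triangle: "\<not> (\<exists>a\<in>E. \<exists>b\<in>E. \<exists>c\<in>E. a \<noteq> b \<and> a \<noteq> c \<and> b \<noteq> c \<and>
                   {a, b} \<in> X ` {1..n} \<and> {a, c} \<in> X ` {1..n} \<and> {b, c} \<in> X ` {1..n})"
begin

text \<open>If two edges through \<open>e\<close> were parallel in the same \<open>M j\<close>, their further points \<open>f, g\<close> would be
  parallel too, hence lie on a third edge of colour \<open>j\<close>. By \<open>large_parallel_edge_closed\<close> all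
  three edges are then pairs, forming a forbidden triangle \<open>e f g\<close>.\<close>
lemma edge_colours_distinct:
  assumes i: "i \<in> {1..n}" and i': "i' \<in> {1..n}" "i \<noteq> i'" and e: "e \<in> X i" "e \<in> X i'"
    and ns: "\<not> is_singleton (X i)" "\<not> is_singleton (X i')"
  shows "edge_colour i \<noteq> edge_colour i'"
proof
  assume same: "edge_colour i = edge_colour i'"
  define j where "j = edge_colour i"
  have j: "j \<in> {1..k}" "matroid_parallel_set (M j) (X i)" "matroid_parallel_set (M j) (X i')"
    using edge_colour[OF i ns(1)] edge_colour[OF i'(1) ns(2)] same unfolding j_def by simp_all
  obtain f where f: "f \<in> X i" "f \<noteq> e"
    using two_points_if_not_singleton[OF i ns(1)] by metis
  obtain g where g: "g \<in> X i'" "g \<noteq> e"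
    using two_points_if_not_singleton[OF i'(1) ns(2)] by metis
  have E: "e \<in> E" "f \<in> E" "g \<in> E"
    using e f g edge_subset i i'(1) by auto
  have out: "g \<notin> X i" "f \<notin> X i'"
    using edge_unique[OF i i'(1)] e f g i'(2) by blast+
  then have "f \<noteq> g"
    using f by blast
  have ef: "parallel j e f" and eg: "parallel j e g"
    using j e f g unfolding matroid_parallel_set_def by auto
  then have "parallel j f g"
    using matroid_parallel_trans[OF matroid_M[OF j(1)] matroid_parallel_sym] by blast
  then obtain i'' where i'': "i'' \<in> {1..n}" "f \<in> X i''" "g \<in> X i''"
    using parallel_imp_common_edge \<open>f \<noteq> g\<close> E j(1) by metis
  have e_out: "e \<notin> X i''"
    using edge_unique[OF i i''(1), of e f] e f i'' out(1) by auto
  have "\<not> is_singleton (X i'')"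
    using i'' \<open>f \<noteq> g\<close> by (auto simp: is_singleton_def)
  then have j'': "matroid_parallel_set (M j) (X i'')"
    using edge_colour(2)[OF i''(1)] edge_colour_eq[OF i'' \<open>f \<noteq> g\<close> j(1) \<open>parallel j f g\<close>] by simp
  have "\<not> 3 \<le> card (X i)" "\<not> 3 \<le> card (X i')" "\<not> 3 \<le> card (X i'')"
    using large_parallel_edge_closed[OF i j(1) j(2) _ e(1) E(3) out(1) eg]
      large_parallel_edge_closed[OF i'(1) j(1) j(3) _ e(2) E(2) out(2) ef]
      large_parallel_edge_closed[OF i''(1) j(1) j'' _ i''(2) E(1) e_out matroid_parallel_sym[OF ef]]
    by blast+
  then have "X i = {e, f}" "X i' = {e, g}" "X i'' = {f, g}"
    using small_edge_eq_pair i i' i'' e f g \<open>f \<noteq> g\<close> by metis+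
  then show False
    using no_triangle E f(2) g(2) \<open>f \<noteq> g\<close> i i'(1) i''(1) by (metis image_eqI)
qed

lemma singleton_edge_colour_distinct:
  assumes i: "i \<in> {1..n}" "X i = {e}" and i': "i' \<in> {1..n}" "i' \<noteq> i" "e \<in> X i'"
    and ns: "\<not> is_singleton (X i')"
  shows "colour i \<noteq> colour i'"
proof -
  have "i' \<in> incident e - {i}"
    unfolding incident_def using i' by simp
  then show ?thesis
    using singleton_colour(3)[OF i] i(2) ns unfolding colour_def by auto
qed

lemma colour_proper:
  assumes i: "i \<in> {1..n}" "i' \<in> {1..n}" "i \<noteq> i'" and e: "e \<in> X i" "e \<in> X i'"
  shows "colour i \<noteq> colour i'"
proof (cases "is_singleton (X i)"; cases "is_singleton (X i')")
  assume "is_singleton (X i)" "is_singleton (X i')"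
  then have "X i = X i'"
    using e by (auto elim!: is_singletonE)
  then show ?thesis
    using inj_onD[OF edge_inj] i by blast
next
  assume "is_singleton (X i)" "\<not> is_singleton (X i')"
  then show ?thesis
    using singleton_edge_colour_distinct[OF i(1) _ i(2)] e i(3) by (auto elim!: is_singletonE)
next
  assume "\<not> is_singleton (X i)" "is_singleton (X i')"
  then show ?thesis
    using singleton_edge_colour_distinct[OF i(2) _ i(1)] e i(3) by (auto elim!: is_singletonE)
next
  assume "\<not> is_singleton (X i)" "\<not> is_singleton (X i')"
  then show ?thesis
    using edge_colours_distinct[OF i e] unfolding colour_def by simp
qed

lemma proper_coloring_colour: "proper_coloring n X k colour"
  unfolding proper_coloring_def line_adj_def using colour_range colour_proper by blast

lemma colour_class_rank_ge_1:
  assumes i: "i \<in> {1..n}"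
  shows "1 \<le> rk (colour i) E"
proof -
  obtain e where "e \<in> X i" "rk (colour i) {e} = 1"
    using colour_witness[OF i] .
  then show ?thesis
    using matroid_rank_mono[OF matroid_M[OF colour_range[OF i]], of "{e}" E] edge_subset[OF i] by auto
qed

text \<open>Two points \<open>e, e'\<close> witnessing two edges of colour \<open>j\<close> cannot be parallel in \<open>M j\<close>: they would
  span an edge of colour \<open>j\<close> meeting the first one.\<close>
lemma colour_class_rank_ge_2:
  assumes i: "i \<in> {1..n}" "i' \<in> {1..n}" "i \<noteq> i'" and same: "colour i = colour i'"
  shows "2 \<le> rk (colour i) E"
proof -
  define j where "j = colour i"
  have j: "j \<in> {1..k}"
    using colour_range[OF i(1)] unfolding j_def .
  obtain e where e: "e \<in> X i" "rk j {e} = 1"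
    using colour_witness[OF i(1)] unfolding j_def .
  obtain e' where e': "e' \<in> X i'" "rk j {e'} = 1"
    using colour_witness[OF i(2)] unfolding j_def same .
  have disjoint: "X i \<inter> X i' = {}"
    using colour_proper[OF i] same by blast
  then have "e \<noteq> e'"
    using e e' by blast
  have E: "e \<in> E" "e' \<in> E"
    using e e' edge_subset i by auto
  have "2 \<le> rk j {e, e'}"
  proof (rule ccontr)
    assume "\<not> 2 \<le> rk j {e, e'}"
    moreover have "rk j {e} \<le> rk j {e, e'}"
      using matroid_rank_mono[OF matroid_M[OF j]] by auto
    ultimately have "parallel j e e'"
      unfolding matroid_parallel_def using e e' by auto
    then obtain i'' where i'': "i'' \<in> {1..n}" "e \<in> X i''" "e' \<in> X i''"
      using parallel_imp_common_edge \<open>e \<noteq> e'\<close> E j by metis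
    have "\<not> is_singleton (X i'')"
      using i'' \<open>e \<noteq> e'\<close> by (auto simp: is_singleton_def)
    then have "colour i'' = j"
      using edge_colour_eq[OF i'' \<open>e \<noteq> e'\<close> j \<open>parallel j e e'\<close>] unfolding colour_def by simp
    moreover have "i \<noteq> i''"
      using disjoint e' i'' by blast
    ultimately show False
      using colour_proper[OF i(1) i''(1) _ e(1) i''(2)] j_def by simp
  qed
  moreover have "rk j {e, e'} \<le> rk j E"
    using matroid_rank_mono[OF matroid_M[OF j]] E by simp
  ultimately show ?thesis
    unfolding j_def by simp
qed

lemma colour_classes_bound: "int (color_c1 n k colour) + 2 * int (color_c2plus n k colour) \<le> s"
proof -
  have "int (color_c1 n k colour) + 2 * int (color_c2plus n k colour) \<le> (\<Sum>j\<in>{1..k}. rk j E)"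
  proof (rule color_c1_c2plus_le_sum)
    fix l
    show "0 \<le> rk l E"
      by (rule matroid_rank_nonneg)
  next
    fix l assume "card {i\<in>{1..n}. colour i = l} = 1"
    then have "{i\<in>{1..n}. colour i = l} \<noteq> {}"
      by (metis card.empty zero_neq_one)
    then obtain i where "i \<in> {1..n}" "colour i = l"
      by blast
    then show "1 \<le> rk l E"
      using colour_class_rank_ge_1 by blast
  next
    fix l assume "2 \<le> card {i\<in>{1..n}. colour i = l}"
    then obtain i i' where "i \<in> {i\<in>{1..n}. colour i = l}" "i' \<in> {i\<in>{1..n}. colour i = l}" "i \<noteq> i'"
      using card_ge_2E[of "{i\<in>{1..n}. colour i = l}"] by auto
    then show "2 \<le> rk l E"
      using colour_class_rank_ge_2[of i i'] by auto
  qed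
  then show ?thesis
    using sum_rank_ground by simp
qed

end

theorem corollary2p12:
  fixes E :: "'a set" and n :: nat and X :: "nat \<Rightarrow> 'a set" and s :: int
  assumes hyp: "hypergraph E n X"
    and lin: "\<forall>i\<in>{1..n}. \<forall>j\<in>{1..n}. i \<noteq> j \<longrightarrow> card (X i \<inter> X j) \<le> 1"
    and notri: "\<not> (\<exists>a\<in>E. \<exists>b\<in>E. \<exists>c\<in>E. a \<noteq> b \<and> a \<noteq> c \<and> b \<noteq> c \<and>
                   {a, b} \<in> X ` {1..n} \<and> {a, c} \<in> X ` {1..n} \<and> {b, c} \<in> X ` {1..n})"
    and s_lower: "\<forall>A. A \<subseteq> E \<and> card A \<le> 4 \<longrightarrow> hyp_rho n X A \<le> s"
    and s_upper: "s < hyp_rho n X E"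
  shows "(\<forall>k. k_decomposable E (truncation (hyp_rho n X) s) k \<longrightarrow>
            (\<exists>c. proper_coloring n X k c \<and>
                 s \<ge> int (color_c1 n k c) + 2 * int (color_c2plus n k c)))
         \<and> (s < int (chromatic_number n X) \<longrightarrow> indecomposable E (truncation (hyp_rho n X) s))"
proof -
  have colouring: "\<exists>c. proper_coloring n X k c \<and> s \<ge> int (color_c1 n k c) + 2 * int (color_c2plus n k c)"
    if decomposable: "k_decomposable E (truncation (hyp_rho n X) s) k" for k
  proof -
    obtain M where "\<forall>j\<in>{1..k}. matroid E (M j)"
      "\<forall>Y. Y \<subseteq> E \<longrightarrow> truncation (hyp_rho n X) s Y = (\<Sum>j\<in>{1..k}. matroid_rank (M j) Y)"
      using decomposable unfolding k_decomposable_def by blast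
    then interpret triangle_free_decomposition E n X s k M
      using assms by unfold_locales
    show ?thesis
      using proper_coloring_colour colour_classes_bound by blast
  qed
  moreover have "indecomposable E (truncation (hyp_rho n X) s)" if "s < int (chromatic_number n X)"
    unfolding indecomposable_def
  proof (intro allI notI)
    fix k assume "k_decomposable E (truncation (hyp_rho n X) s) k"
    then obtain c where "proper_coloring n X k c"
      "s \<ge> int (color_c1 n k c) + 2 * int (color_c2plus n k c)"
      using colouring by blast
    then show False
      using chromatic_number_le_colours_used[of n X k c] that by linarith
  qed
  ultimately show ?thesis
    by blast
qed

end
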